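(* Fix $\ell\in\mathbb N$ and $a>0$, and assume $p_n\sim an^{-1/\ell}$. Then for each $j\in\{1,\dots,\ell\}$, $\Delta^{n,p_n}(j)\to\infty$ in probability as $n\to\infty$.
   Context: Let $p\in[0,1]$. Let $Z=(Z(t))_{t\ge0}$ be a standard Yule process: a continuous-time pure birth process started from $Z(0)=1$ in which each individual gives birth at rate $1$. Each newborn child is, independently of everything else, a clone of its parent (same genetic type) with probability $p$, and a mutant carrying a new genetic type with probability $1-p$. The ancestor has type $1$ and the successive mutants receive types $2,3,\dots$ in order of birth. For $i\in\mathbb N$, $Y_i^{(p)}(t)$ is the number of individuals of type $i$ at time $t$. Let $\tau_n=\inf\{t\ge0:Z(t)=n\}$. For $x\ge0$, $N^{n,p}(x)=\sum_{i\ge1}\mathbf 1_{\{Y_i^{(p)}(\tau_n)>x\}}$, and $\Delta^{n,p}(j)=N^{n,p}(j-1)-N^{n,p}(j)$ is the number of types with exactly $j$ individuals at time $\tau_n$. $a_n\sim b_n$ means $a_n/b_n\to1$. *)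

theory Defs
  imports "HOL-Probability.Probability" "HOL-Library.Landau_Symbols"
begin

text \<open>Embedded jump chain of the Yule process with clonal/mutant births.
  A state is (number of types so far, list of the types of the individuals).
  In the Yule process with rate-1 births, at each jump the parent is a
  uniformly chosen individual among the current ones; the child is a clone
  with probability p and otherwise gets the next fresh type.\<close>

definition yule_step :: "real \<Rightarrow> nat \<times> nat list \<Rightarrow> (nat \<times> nat list) pmf" where
  "yule_step p s =
     (case s of (nt, xs) \<Rightarrow>
        bind_pmf (pmf_of_set {0..<length xs}) (\<lambda>u.
        bind_pmf (bernoulli_pmf p) (\<lambda>clone.
          return_pmf (if clone then (nt, xs @ [xs ! u]) else (Suc nt, xs @ [Suc nt])))))"

fun yule_chain :: "real \<Rightarrow> nat \<Rightarrow> (nat \<times> nat list) pmf" where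
  "yule_chain p 0 = return_pmf (1, [1])"
| "yule_chain p (Suc m) = bind_pmf (yule_chain p m) (yule_step p)"

text \<open>State of the population at time tau_n (the n-th individual is born),
  i.e. after n - 1 births; meaningful for n >= 1.\<close>
definition yule_at_tau :: "real \<Rightarrow> nat \<Rightarrow> (nat \<times> nat list) pmf" where
  "yule_at_tau p n = yule_chain p (n - 1)"

definition type_count :: "nat \<times> nat list \<Rightarrow> nat \<Rightarrow> nat" where
  "type_count s i = count_list (snd s) i"

definition N_types :: "nat \<times> nat list \<Rightarrow> real \<Rightarrow> nat" where
  "N_types s x = card {i::nat. 1 \<le> i \<and> real (type_count s i) > x}"

definition Delta_types :: "nat \<times> nat list \<Rightarrow> nat \<Rightarrow> int" where
  "Delta_types s j = int (N_types s (real j - 1)) - int (N_types s (real j))"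

end

theory Submission
  imports Defs "HOL-Real_Asymp.Multiseries_Expansion"
begin

text \<open>Let A_k (\<open>types_ge k\<close>) be the number of types with at least k individuals, so that
  Delta(j) = A_j - A_(j+1), and follow the embedded jump chain. With m + 1 individuals present,
  the next newborn joins a type of size r with probability q r S_r / (m + 1), where S_r \<le> A_r
  counts the types of size exactly r. Hence E A_(r+1) \<le> r! q^r (m + 1) by induction on r, and
  A_(r+1) minus its compensator is a martingale whose second moment is at most E A_(r+1).
  A second induction on r shows that A_r \<ge> c_r (m + 1) q^(r-1) except with probability
  O(q + 1 / ((m + 1) q^(r-1))): if A_r is that large halfway through while A_(r+1) is still small,
  the compensator, and with it A_(r+1), grows by order (m + 1) q^r during the second half.
  For q = p_n ~ a n^(-1/l) and j \<le> l we have q \<rightarrow> 0 and n q^(j-1) \<rightarrow> \<infinity>, so A_j is of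
  order n q^(j-1), while by Markov's inequality A_(j+1) is of the smaller order n q^j.\<close>

lemma pmf_Markov_inequality:
  fixes f :: "'a \<Rightarrow> real"
  assumes "finite (set_pmf p)" "\<And>x. x \<in> set_pmf p \<Longrightarrow> 0 \<le> f x" "0 < c"
  shows "measure_pmf.prob p {x. c \<le> f x} \<le> measure_pmf.expectation p f / c"
  using integral_Markov_inequality_measure[of "measure_pmf p" f UNIV c] assms
  by (auto simp: integrable_measure_pmf_finite AE_measure_pmf_iff)

lemma measure_pmf_prob_mono_on_support:
  assumes "\<And>x. x \<in> set_pmf p \<Longrightarrow> x \<in> A \<Longrightarrow> x \<in> B"
  shows "measure_pmf.prob p A \<le> measure_pmf.prob p B"
  using assms by (intro measure_pmf.finite_measure_mono_AE) (auto simp: AE_measure_pmf_iff)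

section \<open>Counting types by size\<close>

text \<open>For \<open>k = 0\<close> the set below is infinite and \<open>card\<close> returns \<open>0\<close>; hence the side
  conditions \<open>1 \<le> k\<close> throughout.\<close>
definition types_ge :: "nat \<Rightarrow> nat list \<Rightarrow> nat" where
  "types_ge k xs = card {i. k \<le> count_list xs i}"

definition types_eq :: "nat \<Rightarrow> nat list \<Rightarrow> nat" where
  "types_eq r xs = card {i. count_list xs i = r}"

lemma count_list_pos_iff: "0 < count_list xs x \<longleftrightarrow> x \<in> set xs"
  by (induction xs) auto

lemma finite_count_list_ge: "1 \<le> k \<Longrightarrow> finite {i. k \<le> count_list xs i}"
  by (rule finite_subset[of _ "set xs"]) (auto simp flip: count_list_pos_iff)

lemma types_ge_one [simp]: "types_ge (Suc 0) xs = card (set xs)"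
  unfolding types_ge_def by (simp add: Suc_le_eq count_list_pos_iff)

lemma types_ge_snoc:
  assumes "1 \<le> k"
  shows "types_ge k (xs @ [y]) = types_ge k xs + of_bool (count_list xs y + 1 = k)"
proof -
  have "{i. k \<le> count_list (xs @ [y]) i} =
      (if count_list xs y + 1 = k then insert y else id) {i. k \<le> count_list xs i}"
    by auto
  then show ?thesis
    using finite_count_list_ge[OF assms, of xs] by (simp add: types_ge_def)
qed

lemma types_ge_eq_types_eq_add:
  assumes "1 \<le> r"
  shows "types_ge r xs = types_eq r xs + types_ge (Suc r) xs"
proof -
  have "{i. r \<le> count_list xs i} = {i. count_list xs i = r} \<union> {i. Suc r \<le> count_list xs i}"
    by auto
  moreover have "finite {i. count_list xs i = r}"
    using finite_count_list_ge[OF assms, of xs] by (rule rev_finite_subset) auto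
  ultimately show ?thesis
    unfolding types_ge_def types_eq_def using assms
    by (simp add: card_Un_disjoint finite_count_list_ge disjoint_iff)
qed

lemma types_ge_mono:
  assumes "1 \<le> k" "\<And>i. count_list ys i \<le> count_list zs i"
  shows "types_ge k ys \<le> types_ge k zs"
  unfolding types_ge_def using assms
  by (intro card_mono finite_count_list_ge) (auto intro: order.trans)

lemma types_ge_take_mono:
  assumes "1 \<le> k" "h \<le> s"
  shows "types_ge k (take h xs) \<le> types_ge k (take s xs)"
proof (rule types_ge_mono[OF assms(1)])
  have "take s xs = take h xs @ take (s - h) (drop h xs)"
    using assms(2) by (metis le_add_diff_inverse take_add)
  then show "count_list (take h xs) i \<le> count_list (take s xs) i" for i
    by simp
qed

lemma types_ge_take_le: "1 \<le> k \<Longrightarrow> types_ge k (take h xs) \<le> types_ge k xs"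
  using types_ge_take_mono[of k h "length xs + h" xs] by simp

lemma sum_nth_count_list_eq:
  "(\<Sum>u<length xs. of_bool (count_list xs (xs ! u) = r) :: nat) = r * types_eq r xs"
proof -
  have "(\<Sum>u<length xs. of_bool (count_list xs (xs ! u) = r))
      = sum_list (map (\<lambda>x. of_bool (count_list xs x = r)) xs)"
    by (simp add: sum_list_sum_nth atLeast0LessThan)
  also have "\<dots> = (\<Sum>x\<in>set xs. count_list xs x * of_bool (count_list xs x = r))"
    by (rule sum_list_map_eq_sum_count)
  also have "\<dots> = r * card {x\<in>set xs. count_list xs x = r}"
    by (simp add: sum.inter_filter[symmetric] of_bool_def if_distrib cong: if_cong)
  also have "\<dots> = r * types_eq r xs"
  proof (cases "r = 0")
    case False
    then have "{x\<in>set xs. count_list xs x = r} = {i. count_list xs i = r}"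
      by (auto simp flip: count_list_pos_iff)
    then show ?thesis
      unfolding types_eq_def by simp
  qed simp
  finally show ?thesis .
qed

section \<open>The embedded jump chain\<close>

lemma set_pmf_yule_step:
  assumes "xs \<noteq> []"
  shows "set_pmf (yule_step q (nt, xs)) \<subseteq>
    insert (Suc nt, xs @ [Suc nt]) ((\<lambda>u. (nt, xs @ [xs ! u])) ` {..<length xs})"
  using assms unfolding yule_step_def by (auto split: if_splits)

lemma set_pmf_yule_chain:
  assumes "s \<in> set_pmf (yule_chain q m)"
  shows "length (snd s) = Suc m" "set (snd s) \<subseteq> {1..fst s}"
proof -
  have "length (snd s) = Suc m \<and> set (snd s) \<subseteq> {1..fst s}"
    using assms
  proof (induction m arbitrary: s)
    case (Suc m)
    then obtain nt xs where s0: "(nt, xs) \<in> set_pmf (yule_chain q m)"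
      and s: "s \<in> set_pmf (yule_step q (nt, xs))"
      by auto
    from Suc.IH[OF s0] have xs: "length xs = Suc m" "set xs \<subseteq> {1..nt}"
      by auto
    then have "xs \<noteq> []"
      by auto
    from set_pmf_yule_step[OF this] s consider
        "s = (Suc nt, xs @ [Suc nt])"
      | u where "u < length xs" "s = (nt, xs @ [xs ! u])"
      by blast
    then show ?case
    proof cases
      case 1
      with xs show ?thesis
        by auto
    next
      case 2
      have "xs ! u \<in> {1..nt}"
        using 2(1) xs(2) nth_mem[of u xs] by blast
      with 2 xs show ?thesis
        by auto
    qed
  qed simp
  then show "length (snd s) = Suc m" "set (snd s) \<subseteq> {1..fst s}"
    by auto
qed

lemma yule_chain_state_nonempty_fresh:
  assumes "(nt, xs) \<in> set_pmf (yule_chain q m)"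
  shows "xs \<noteq> []" "Suc nt \<notin> set xs"
  using set_pmf_yule_chain[OF assms] by auto

lemma finite_set_pmf_yule_step:
  assumes "s \<in> set_pmf (yule_chain q m)"
  shows "finite (set_pmf (yule_step q' s))"
proof -
  obtain nt xs where s: "s = (nt, xs)"
    by (cases s)
  then have "xs \<noteq> []"
    using yule_chain_state_nonempty_fresh assms by blast
  then show ?thesis
    unfolding s by (rule finite_subset[OF set_pmf_yule_step]) auto
qed

lemma finite_set_pmf_yule_chain: "finite (set_pmf (yule_chain q m))"
proof (induction m)
  case (Suc m)
  then show ?case
    using finite_set_pmf_yule_step[of _ q m q] by simp
qed simp

lemma yule_step_snoc:
  assumes "s \<in> set_pmf (yule_chain q m)" "s' \<in> set_pmf (yule_step q' s)"
  shows "snd s' = snd s @ [last (snd s')]"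
proof -
  obtain nt xs where s: "s = (nt, xs)"
    by (cases s)
  then have "xs \<noteq> []"
    using yule_chain_state_nonempty_fresh assms(1) by blast
  with assms(2) set_pmf_yule_step[of xs q' nt] show ?thesis
    unfolding s by auto
qed

lemma integrable_yule_chain [simp]: "integrable (measure_pmf (yule_chain q m)) (f :: _ \<Rightarrow> real)"
  by (simp add: integrable_measure_pmf_finite finite_set_pmf_yule_chain)

lemma expectation_yule_chain_Suc:
  fixes h :: "nat \<times> nat list \<Rightarrow> real"
  shows "measure_pmf.expectation (yule_chain q (Suc m)) h =
    measure_pmf.expectation (yule_chain q m) (\<lambda>s. measure_pmf.expectation (yule_step q s) h)"
proof -
  have "measure_pmf.expectation (yule_chain q (Suc m)) h =
      (\<Sum>s\<in>set_pmf (yule_chain q m). pmf (yule_chain q m) s *\<^sub>R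
         measure_pmf.expectation (yule_step q s) h)"
    unfolding yule_chain.simps
    by (rule pmf_expectation_bind) (auto simp: finite_set_pmf_yule_chain finite_set_pmf_yule_step)
  also have "\<dots> = measure_pmf.expectation (yule_chain q m)
      (\<lambda>s. measure_pmf.expectation (yule_step q s) h)"
    by (rule integral_measure_pmf[symmetric]) (simp_all add: finite_set_pmf_yule_chain)
  finally show ?thesis .
qed

lemma expectation_yule_step:
  fixes h :: "nat \<times> nat list \<Rightarrow> real"
  assumes "xs \<noteq> []" "0 \<le> q" "q \<le> 1"
  shows "measure_pmf.expectation (yule_step q (nt, xs)) h =
    (\<Sum>u<length xs. q * h (nt, xs @ [xs ! u]) + (1 - q) * h (Suc nt, xs @ [Suc nt])) / length xs"
proof -
  have "measure_pmf.expectation (yule_step q (nt, xs)) h =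
      (\<Sum>u\<in>{0..<length xs}. measure_pmf.expectation (bernoulli_pmf q \<bind> (\<lambda>clone.
         return_pmf (if clone then (nt, xs @ [xs ! u]) else (Suc nt, xs @ [Suc nt])))) h
       /\<^sub>R real (card {0..<length xs}))"
    unfolding yule_step_def using assms
    by (simp only: prod.case, intro pmf_expectation_bind_pmf_of_set)
       (auto intro!: finite_subset[OF set_bind_pmf[THEN equalityD1]])
  also have "\<dots> = (\<Sum>u<length xs. (q * h (nt, xs @ [xs ! u]) + (1 - q) * h (Suc nt, xs @ [Suc nt]))
      / length xs)"
    using assms unfolding atLeast0LessThan
    by (intro sum.cong refl) (simp add: map_pmf_def[symmetric] mult.commute divide_inverse)
  finally show ?thesis
    by (simp add: sum_divide_distrib)
qed

section \<open>First moments\<close>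

text \<open>The next newborn joins a type of current size \<open>r\<close> iff it is a clone (probability \<open>q\<close>)
  of one of the \<open>r * types_eq r xs\<close> individuals of such types, its parent being uniform among
  all \<open>length xs\<close> individuals.\<close>
definition join_prob :: "real \<Rightarrow> nat \<Rightarrow> nat list \<Rightarrow> real" where
  "join_prob q r xs = q * r * types_eq r xs / length xs"

lemma expectation_yule_step_join:
  fixes G :: "real \<Rightarrow> real"
  assumes "s \<in> set_pmf (yule_chain q m)" "0 \<le> q" "q \<le> 1" "1 \<le> r"
  shows "measure_pmf.expectation (yule_step q s)
      (\<lambda>s'. G (of_bool (count_list (snd s) (last (snd s')) = r)))
    = G 0 + (G 1 - G 0) * join_prob q r (snd s)"
proof -
  obtain nt xs where s: "s = (nt, xs)"
    by (cases s)
  have xs: "xs \<noteq> []" "count_list xs (Suc nt) = 0"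
    using yule_chain_state_nonempty_fresh assms(1) unfolding s by auto
  let ?J = "\<lambda>u. of_bool (count_list xs (xs ! u) = r) :: real"
  have "measure_pmf.expectation (yule_step q (nt, xs))
      (\<lambda>s'. G (of_bool (count_list xs (last (snd s')) = r)))
    = (\<Sum>u<length xs. q * G (?J u) + (1 - q) * G 0) / length xs"
    using xs assms by (subst expectation_yule_step) auto
  also have "\<dots> = (\<Sum>u<length xs. G 0 + q * (G 1 - G 0) * ?J u) / length xs"
    by (intro arg_cong2[where f = "(/)"] sum.cong) (auto simp: algebra_simps)
  also have "\<dots> = G 0 + q * (G 1 - G 0) * (\<Sum>u<length xs. ?J u) / length xs"
    using xs by (simp add: sum.distrib flip: sum_distrib_left) (simp add: field_simps)
  also have "(\<Sum>u<length xs. ?J u) = r * types_eq r xs"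
    using arg_cong[OF sum_nth_count_list_eq[of xs r], of real] by simp
  finally show ?thesis
    unfolding s join_prob_def by (simp add: algebra_simps)
qed

lemma types_ge_yule_step:
  assumes "s \<in> set_pmf (yule_chain q m)" "s' \<in> set_pmf (yule_step q s)" "1 \<le> r"
  shows "types_ge (Suc r) (snd s') =
    types_ge (Suc r) (snd s) + of_bool (count_list (snd s) (last (snd s')) = r)"
proof -
  have "snd s' = snd s @ [last (snd s')]"
    using assms(1,2) by (rule yule_step_snoc)
  then show ?thesis
    using types_ge_snoc[of "Suc r" "snd s" "last (snd s')"] by simp
qed

lemma expectation_types_ge_yule_chain_Suc:
  assumes "0 \<le> q" "q \<le> 1" "1 \<le> r"
  shows "measure_pmf.expectation (yule_chain q (Suc m)) (\<lambda>s. real (types_ge (Suc r) (snd s)))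
    = measure_pmf.expectation (yule_chain q m) (\<lambda>s. real (types_ge (Suc r) (snd s)))
      + measure_pmf.expectation (yule_chain q m) (\<lambda>s. join_prob q r (snd s))"
proof -
  have "measure_pmf.expectation (yule_step q s) (\<lambda>s'. real (types_ge (Suc r) (snd s')))
      = real (types_ge (Suc r) (snd s)) + join_prob q r (snd s)"
    if s: "s \<in> set_pmf (yule_chain q m)" for s
  proof -
    have "measure_pmf.expectation (yule_step q s) (\<lambda>s'. real (types_ge (Suc r) (snd s')))
      = measure_pmf.expectation (yule_step q s)
          (\<lambda>s'. real (types_ge (Suc r) (snd s)) + of_bool (count_list (snd s) (last (snd s')) = r))"
      using types_ge_yule_step[OF s _ assms(3)] by (intro integral_cong_AE) (auto simp: AE_measure_pmf_iff)
    also have "\<dots> = real (types_ge (Suc r) (snd s)) + join_prob q r (snd s)"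
      using expectation_yule_step_join[OF s assms, of "\<lambda>x. real (types_ge (Suc r) (snd s)) + x"]
      by simp
    finally show ?thesis .
  qed
  then have "measure_pmf.expectation (yule_chain q (Suc m)) (\<lambda>s. real (types_ge (Suc r) (snd s)))
    = measure_pmf.expectation (yule_chain q m)
        (\<lambda>s. real (types_ge (Suc r) (snd s)) + join_prob q r (snd s))"
    unfolding expectation_yule_chain_Suc by (intro integral_cong_AE) (auto simp: AE_measure_pmf_iff)
  then show ?thesis
    by simp
qed

lemma expectation_card_set_yule_chain:
  assumes "0 \<le> q" "q \<le> 1"
  shows "measure_pmf.expectation (yule_chain q m) (\<lambda>s. real (card (set (snd s)))) = 1 + m * (1 - q)"
proof (induction m)
  case (Suc m)
  have "measure_pmf.expectation (yule_step q s) (\<lambda>s'. real (card (set (snd s'))))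
      = real (card (set (snd s))) + (1 - q)"
    if s: "s \<in> set_pmf (yule_chain q m)" for s
  proof -
    obtain nt xs where s': "s = (nt, xs)"
      by (cases s)
    have xs: "xs \<noteq> []" "Suc nt \<notin> set xs"
      using yule_chain_state_nonempty_fresh s unfolding s' by auto
    have "measure_pmf.expectation (yule_step q (nt, xs)) (\<lambda>s'. real (card (set (snd s'))))
      = (\<Sum>u<length xs. q * card (set xs) + (1 - q) * (card (set xs) + 1)) / length xs"
      using xs assms by (subst expectation_yule_step) (auto intro!: sum.cong simp: insert_absorb)
    also have "\<dots> = card (set xs) + (1 - q)"
      using xs by (simp add: field_simps)
    finally show ?thesis
      unfolding s' by simp
  qed
  then have "measure_pmf.expectation (yule_chain q (Suc m)) (\<lambda>s. real (card (set (snd s))))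
    = measure_pmf.expectation (yule_chain q m) (\<lambda>s. real (card (set (snd s))) + (1 - q))"
    unfolding expectation_yule_chain_Suc by (intro integral_cong_AE) (auto simp: AE_measure_pmf_iff)
  with Suc show ?case
    by (simp add: algebra_simps)
qed simp

lemma join_prob_le:
  assumes "0 \<le> q" "1 \<le> r"
  shows "join_prob q r xs \<le> q * r * types_ge r xs / length xs"
  unfolding join_prob_def using assms types_ge_eq_types_eq_add[OF assms(2), of xs]
  by (intro divide_right_mono mult_left_mono) auto

lemma expectation_types_ge_Suc_Suc_le:
  assumes "0 \<le> q" "q \<le> 1"
    and IH: "\<And>m. measure_pmf.expectation (yule_chain q m) (\<lambda>s. real (types_ge (Suc r) (snd s)))
      \<le> fact r * q ^ r * Suc m"
  shows "measure_pmf.expectation (yule_chain q m) (\<lambda>s. real (types_ge (Suc (Suc r)) (snd s)))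
    \<le> fact (Suc r) * q ^ Suc r * m"
proof (induction m)
  case (Suc m)
  have "join_prob q (Suc r) (snd s) \<le> q * Suc r / Suc m * types_ge (Suc r) (snd s)"
    if "s \<in> set_pmf (yule_chain q m)" for s
    using join_prob_le[OF assms(1), of "Suc r" "snd s"] set_pmf_yule_chain(1)[OF that] by simp
  then have "measure_pmf.expectation (yule_chain q m) (\<lambda>s. join_prob q (Suc r) (snd s))
    \<le> measure_pmf.expectation (yule_chain q m) (\<lambda>s. q * Suc r / Suc m * types_ge (Suc r) (snd s))"
    by (intro integral_mono_AE) (auto simp: AE_measure_pmf_iff)
  also have "\<dots> = q * Suc r / Suc m *
      measure_pmf.expectation (yule_chain q m) (\<lambda>s. real (types_ge (Suc r) (snd s)))"
    by simp
  also have "\<dots> \<le> q * Suc r / Suc m * (fact r * q ^ r * Suc m)"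
    using IH[of m] assms by (intro mult_left_mono) auto
  also have "\<dots> = fact (Suc r) * q ^ Suc r"
    by (simp add: field_simps)
  finally show ?case
    using Suc.IH expectation_types_ge_yule_chain_Suc[OF assms(1,2), of "Suc r" m]
    by (simp add: algebra_simps)
qed (simp add: types_ge_def)

lemma expectation_types_ge_le:
  assumes "0 \<le> q" "q \<le> 1"
  shows "measure_pmf.expectation (yule_chain q m) (\<lambda>s. real (types_ge (Suc r) (snd s)))
    \<le> fact r * q ^ r * Suc m"
proof (induction r arbitrary: m)
  case 0
  have "real (types_ge 1 (snd s)) \<le> Suc m" if "s \<in> set_pmf (yule_chain q m)" for s
    using set_pmf_yule_chain(1)[OF that] card_length[of "snd s"] by simp
  then have "measure_pmf.expectation (yule_chain q m) (\<lambda>s. real (types_ge 1 (snd s)))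
      \<le> measure_pmf.expectation (yule_chain q m) (\<lambda>s. real (Suc m))"
    by (intro integral_mono_AE) (auto simp: AE_measure_pmf_iff)
  then show ?case
    by simp
next
  case (Suc r)
  have "fact (Suc r) * q ^ Suc r * m \<le> fact (Suc r) * q ^ Suc r * Suc m"
    using assms by (intro mult_left_mono) auto
  with expectation_types_ge_Suc_Suc_le[OF assms Suc.IH, of m] show ?case
    by linarith
qed

section \<open>The compensator martingale\<close>

text \<open>All earlier states of the chain are prefixes of the current list, so the compensator of
  \<open>types_ge (Suc r)\<close> can be read off the current list alone.\<close>
definition join_compensator :: "real \<Rightarrow> nat \<Rightarrow> nat list \<Rightarrow> real" where
  "join_compensator q r xs = (\<Sum>s\<in>{1..<length xs}. join_prob q r (take s xs))"

definition join_martingale :: "real \<Rightarrow> nat \<Rightarrow> nat list \<Rightarrow> real" where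
  "join_martingale q r xs = types_ge (Suc r) xs - join_compensator q r xs"

lemma join_compensator_snoc:
  assumes "xs \<noteq> []"
  shows "join_compensator q r (xs @ [y]) = join_compensator q r xs + join_prob q r xs"
proof -
  have "{1..<length (xs @ [y])} = insert (length xs) {1..<length xs}"
    using assms by (cases xs) auto
  then have "join_compensator q r (xs @ [y]) =
      join_prob q r xs + (\<Sum>s\<in>{1..<length xs}. join_prob q r (take s (xs @ [y])))"
    unfolding join_compensator_def by simp
  also have "(\<Sum>s\<in>{1..<length xs}. join_prob q r (take s (xs @ [y]))) = join_compensator q r xs"
    unfolding join_compensator_def by (intro sum.cong) auto
  finally show ?thesis
    by simp
qed

lemma join_martingale_yule_step:
  assumes "s \<in> set_pmf (yule_chain q m)" "s' \<in> set_pmf (yule_step q s)" "1 \<le> r"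
  shows "join_martingale q r (snd s') = join_martingale q r (snd s) - join_prob q r (snd s)
    + of_bool (count_list (snd s) (last (snd s')) = r)"
proof -
  have "snd s \<noteq> []"
    using set_pmf_yule_chain(1)[OF assms(1)] by auto
  then have "join_compensator q r (snd s') = join_compensator q r (snd s) + join_prob q r (snd s)"
    using yule_step_snoc[OF assms(1,2)] join_compensator_snoc by metis
  then show ?thesis
    unfolding join_martingale_def types_ge_yule_step[OF assms] by simp
qed

lemma expectation_join_martingale_sq_yule_chain_Suc:
  assumes "0 \<le> q" "q \<le> 1" "1 \<le> r"
  shows "measure_pmf.expectation (yule_chain q (Suc m)) (\<lambda>s. (join_martingale q r (snd s))\<^sup>2)
    \<le> measure_pmf.expectation (yule_chain q m) (\<lambda>s. (join_martingale q r (snd s))\<^sup>2)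
      + measure_pmf.expectation (yule_chain q m) (\<lambda>s. join_prob q r (snd s))"
proof -
  have step: "measure_pmf.expectation (yule_step q s) (\<lambda>s'. (join_martingale q r (snd s'))\<^sup>2)
      \<le> (join_martingale q r (snd s))\<^sup>2 + join_prob q r (snd s)"
    if s: "s \<in> set_pmf (yule_chain q m)" for s
  proof -
    define c where "c = join_martingale q r (snd s) - join_prob q r (snd s)"
    have "measure_pmf.expectation (yule_step q s) (\<lambda>s'. (join_martingale q r (snd s'))\<^sup>2)
      = measure_pmf.expectation (yule_step q s)
          (\<lambda>s'. (c + of_bool (count_list (snd s) (last (snd s')) = r))\<^sup>2)"
      using join_martingale_yule_step[OF s _ assms(3)] unfolding c_def
      by (intro integral_cong_AE) (auto simp: AE_measure_pmf_iff)
    also have "\<dots> = c\<^sup>2 + ((c + 1)\<^sup>2 - c\<^sup>2) * join_prob q r (snd s)"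
      using expectation_yule_step_join[OF s assms, of "\<lambda>x. (c + x)\<^sup>2"] by simp
    also have "\<dots> = (join_martingale q r (snd s))\<^sup>2 + join_prob q r (snd s) - (join_prob q r (snd s))\<^sup>2"
      unfolding c_def by (simp add: power2_eq_square algebra_simps)
    finally show ?thesis
      by simp
  qed
  have "measure_pmf.expectation (yule_chain q (Suc m)) (\<lambda>s. (join_martingale q r (snd s))\<^sup>2)
    \<le> measure_pmf.expectation (yule_chain q m)
        (\<lambda>s. (join_martingale q r (snd s))\<^sup>2 + join_prob q r (snd s))"
    unfolding expectation_yule_chain_Suc using step
    by (intro integral_mono_AE) (auto simp: AE_measure_pmf_iff)
  then show ?thesis
    by simp
qed

lemma expectation_join_martingale_sq_le:
  assumes "0 \<le> q" "q \<le> 1" "1 \<le> r"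
  shows "measure_pmf.expectation (yule_chain q m) (\<lambda>s. (join_martingale q r (snd s))\<^sup>2)
    \<le> measure_pmf.expectation (yule_chain q m) (\<lambda>s. real (types_ge (Suc r) (snd s)))"
proof (induction m)
  case 0
  have "join_martingale q r [1] = 0"
    using assms by (simp add: join_martingale_def join_compensator_def types_ge_def)
  then show ?case
    by simp
next
  case (Suc m)
  then show ?case
    using expectation_join_martingale_sq_yule_chain_Suc[OF assms, of m]
      expectation_types_ge_yule_chain_Suc[OF assms, of m]
    by linarith
qed

text \<open>At every time between \<open>k + 1\<close> and \<open>length xs\<close>, each type of size \<open>\<ge> r\<close> at time
  \<open>k + 1\<close> that never exceeds size \<open>r\<close> has size exactly \<open>r\<close>.\<close>
lemma join_compensator_ge:
  assumes "length xs = Suc m" "k \<le> m" "0 \<le> q" "1 \<le> r"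
  shows "real (m - k) * (q * r / Suc m) * (real (types_ge r (take (Suc k) xs)) - types_ge (Suc r) xs)
    \<le> join_compensator q r xs"
proof -
  let ?D = "real (types_ge r (take (Suc k) xs)) - types_ge (Suc r) xs"
  have "q * r / Suc m * ?D \<le> join_prob q r (take s xs)" if s: "s \<in> {Suc k..<Suc m}" for s
  proof -
    have "types_ge r (take (Suc k) xs) \<le> types_ge r (take s xs)"
      using s assms by (intro types_ge_take_mono) auto
    moreover have "types_ge (Suc r) (take s xs) \<le> types_ge (Suc r) xs"
      by (intro types_ge_take_le) auto
    ultimately have D: "?D \<le> types_eq r (take s xs)"
      using types_ge_eq_types_eq_add[OF assms(4), of "take s xs"] by linarith
    have "q * r / Suc m * ?D \<le> q * r / Suc m * types_eq r (take s xs)"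
      using D assms by (intro mult_left_mono) auto
    also have "\<dots> \<le> join_prob q r (take s xs)"
      using s assms unfolding join_prob_def
      by (auto simp: divide_simps mult_left_mono)
    finally show ?thesis .
  qed
  then have "(\<Sum>s\<in>{Suc k..<Suc m}. q * r / Suc m * ?D) \<le> (\<Sum>s\<in>{Suc k..<Suc m}. join_prob q r (take s xs))"
    by (rule sum_mono)
  also have "\<dots> \<le> join_compensator q r xs"
    unfolding join_compensator_def using assms
    by (intro sum_mono2) (auto simp: join_prob_def)
  finally have "(\<Sum>s\<in>{Suc k..<Suc m}. q * r / Suc m * ?D) \<le> join_compensator q r xs" .
  moreover have "(\<Sum>s\<in>{Suc k..<Suc m}. q * r / Suc m * ?D) = real (m - k) * (q * r / Suc m * ?D)"
    by simp
  ultimately show ?thesis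
    by (simp only: mult.assoc)
qed

lemma map_pmf_take_yule_chain:
  assumes "k \<le> m"
  shows "map_pmf (\<lambda>s. take (Suc k) (snd s)) (yule_chain q m) = map_pmf snd (yule_chain q k)"
  using assms
proof (induction m rule: dec_induct)
  case base
  show ?case
    using set_pmf_yule_chain(1) by (intro map_pmf_cong) auto
next
  case (step m)
  have "map_pmf (\<lambda>s. take (Suc k) (snd s)) (yule_step q s) = return_pmf (take (Suc k) (snd s))"
    if s: "s \<in> set_pmf (yule_chain q m)" for s
  proof -
    have "take (Suc k) (snd s') = take (Suc k) (snd s)" if "s' \<in> set_pmf (yule_step q s)" for s'
      using yule_step_snoc[OF s that] set_pmf_yule_chain(1)[OF s] step.hyps
      by (metis Suc_le_mono append_Nil2 diff_is_0_eq take_0 take_append)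
    then have "map_pmf (\<lambda>s. take (Suc k) (snd s)) (yule_step q s)
        = map_pmf (\<lambda>_. take (Suc k) (snd s)) (yule_step q s)"
      by (intro map_pmf_cong) auto
    then show ?thesis
      by (simp add: map_pmf_const)
  qed
  then have "map_pmf (\<lambda>s. take (Suc k) (snd s)) (yule_chain q (Suc m))
      = bind_pmf (yule_chain q m) (\<lambda>s. return_pmf (take (Suc k) (snd s)))"
    by (simp add: map_bind_pmf cong: bind_pmf_cong)
  also have "\<dots> = map_pmf (\<lambda>s. take (Suc k) (snd s)) (yule_chain q m)"
    by (simp add: map_pmf_def)
  finally show ?case
    using step.IH by simp
qed

lemma prob_yule_chain_take:
  assumes "k \<le> m"
  shows "measure_pmf.prob (yule_chain q m) {s. P (take (Suc k) (snd s))}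
    = measure_pmf.prob (yule_chain q k) {s. P (snd s)}"
  using arg_cong[OF map_pmf_take_yule_chain[OF assms, of q], of "\<lambda>M. measure_pmf.prob M {ys. P ys}"]
  by (simp add: measure_map_pmf vimage_def)

section \<open>Tail bounds\<close>

lemma prob_types_ge_ge:
  fixes \<theta> :: real
  assumes "0 \<le> q" "q \<le> 1" "0 < \<theta>"
  shows "measure_pmf.prob (yule_chain q m) {s. \<theta> \<le> types_ge (Suc r) (snd s)}
    \<le> fact r * q ^ r * Suc m / \<theta>"
proof -
  have "measure_pmf.prob (yule_chain q m) {s. \<theta> \<le> types_ge (Suc r) (snd s)}
    \<le> measure_pmf.expectation (yule_chain q m) (\<lambda>s. real (types_ge (Suc r) (snd s))) / \<theta>"
    using pmf_Markov_inequality[OF finite_set_pmf_yule_chain, of q m "\<lambda>s. real (types_ge (Suc r) (snd s))"]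
      assms by simp
  also have "\<dots> \<le> fact r * q ^ r * Suc m / \<theta>"
    using assms expectation_types_ge_le by (intro divide_right_mono) auto
  finally show ?thesis .
qed

lemma prob_join_martingale_ge:
  fixes \<theta> :: real
  assumes "0 \<le> q" "q \<le> 1" "1 \<le> r" "0 < \<theta>"
  shows "measure_pmf.prob (yule_chain q m) {s. \<theta> \<le> \<bar>join_martingale q r (snd s)\<bar>}
    \<le> fact r * q ^ r * Suc m / \<theta>\<^sup>2"
proof -
  have "measure_pmf.prob (yule_chain q m) {s. \<theta> \<le> \<bar>join_martingale q r (snd s)\<bar>}
    \<le> measure_pmf.expectation (yule_chain q m) (\<lambda>s. (join_martingale q r (snd s))\<^sup>2) / \<theta>\<^sup>2"
    using measure_pmf.second_moment_method[where M = "yule_chain q m" and a = \<theta>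
        and f = "\<lambda>s. join_martingale q r (snd s)"] assms(4) by simp
  also have "\<dots> \<le> fact r * q ^ r * Suc m / \<theta>\<^sup>2"
    using expectation_join_martingale_sq_le[OF assms(1-3)] expectation_types_ge_le[OF assms(1,2)]
    by (intro divide_right_mono) (auto intro: order.trans)
  finally show ?thesis .
qed

lemma prob_types_ge_one_lt:
  assumes "0 \<le> q" "q \<le> 1"
  shows "measure_pmf.prob (yule_chain q m) {s. types_ge 1 (snd s) < Suc m / 2} \<le> 2 * q"
proof -
  have "measure_pmf.prob (yule_chain q m) {s. types_ge 1 (snd s) < Suc m / 2}
    \<le> measure_pmf.prob (yule_chain q m) {s. Suc m / 2 \<le> Suc m - real (card (set (snd s)))}"
    by (intro measure_pmf_prob_mono_on_support) auto
  also have "\<dots> \<le> measure_pmf.expectation (yule_chain q m) (\<lambda>s. Suc m - real (card (set (snd s))))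
      / (Suc m / 2)"
  proof (intro pmf_Markov_inequality finite_set_pmf_yule_chain)
    fix s
    assume "s \<in> set_pmf (yule_chain q m)"
    then show "0 \<le> Suc m - real (card (set (snd s)))"
      using set_pmf_yule_chain(1) card_length[of "snd s"] by fastforce
  qed auto
  also have "\<dots> = m * q / (Suc m / 2)"
    using expectation_card_set_yule_chain[OF assms, of m] by (simp add: algebra_simps)
  also have "\<dots> \<le> 2 * q"
    using assms by (simp add: field_simps mult_right_mono)
  finally show ?thesis .
qed

text \<open>If many types have size \<open>\<ge> r\<close> halfway through and few reach size \<open>> r\<close>, then each
  of the last \<open>m - m div 2\<close> steps adds order \<open>q r c q^(r-1)\<close> to the compensator, which
  therefore is of order \<open>(m + 1) q^r\<close>; so is \<open>types_ge (Suc r)\<close> unless the martingale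
  deviates.\<close>
lemma types_ge_Suc_ge:
  fixes q c :: real
  assumes "length xs = Suc m" "1 \<le> m" "0 \<le> q" "1 \<le> r" "0 \<le> c"
    and prefix: "c * Suc (m div 2) * q ^ (r - 1) \<le> types_ge r (take (Suc (m div 2)) xs)"
    and few: "types_ge (Suc r) xs < c / 4 * Suc m * q ^ (r - 1)"
    and mart: "\<bar>join_martingale q r xs\<bar> < r * c / 32 * Suc m * q ^ r"
  shows "r * c / 32 * Suc m * q ^ r \<le> types_ge (Suc r) xs"
proof -
  define k where "k = m div 2"
  define T where "T = real (Suc m)"
  define Q where "Q = q ^ (r - 1)"
  define D where "D = real (types_ge r (take (Suc k) xs)) - types_ge (Suc r) xs"
  have qQ: "q ^ r = q * Q"
    unfolding Q_def using assms(4) by (metis Suc_diff_le diff_Suc_1 power_Suc)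
  have Q: "0 \<le> Q"
    unfolding Q_def using assms(3) by simp
  have "Suc m \<le> 2 * Suc k" "Suc m \<le> 4 * (m - k)"
    unfolding k_def using assms(2) by presburger+
  then have "T \<le> 2 * real (Suc k)" "T \<le> 4 * real (m - k)"
    unfolding T_def by (metis of_nat_le_iff of_nat_mult of_nat_numeral)+
  then have k: "T / 2 \<le> Suc k" "T / 4 \<le> real (m - k)"
    by auto
  have "c * (T / 2) * Q \<le> c * Suc k * Q"
    using k assms(5) Q by (intro mult_right_mono mult_left_mono) auto
  then have D: "c / 4 * T * Q \<le> D"
    using prefix few unfolding D_def T_def Q_def k_def by linarith
  have "r * c / 16 * T * q ^ r = T / 4 * (q * r / T) * (c / 4 * T * Q)"
    unfolding qQ T_def by (simp add: field_simps)
  also have "\<dots> \<le> real (m - k) * (q * r / T) * (c / 4 * T * Q)"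
    using k assms Q unfolding T_def by (intro mult_right_mono) auto
  also have "\<dots> \<le> real (m - k) * (q * r / T) * D"
    using D assms unfolding T_def by (intro mult_left_mono) auto
  also have "\<dots> \<le> join_compensator q r xs"
    using join_compensator_ge[OF assms(1) _ assms(3,4), of k] unfolding D_def T_def k_def by simp
  finally show ?thesis
    using mart unfolding join_martingale_def T_def by linarith
qed

lemma prob_types_ge_Suc_lt_le:
  fixes q c :: real
  assumes "1 \<le> m" "0 \<le> q" "1 \<le> r" "0 \<le> c"
  shows "measure_pmf.prob (yule_chain q m) {s. types_ge (Suc r) (snd s) < r * c / 32 * Suc m * q ^ r}
    \<le> measure_pmf.prob (yule_chain q (m div 2))
          {s. types_ge r (snd s) < c * Suc (m div 2) * q ^ (r - 1)}
      + measure_pmf.prob (yule_chain q m) {s. c / 4 * Suc m * q ^ (r - 1) \<le> types_ge (Suc r) (snd s)}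
      + measure_pmf.prob (yule_chain q m) {s. r * c / 32 * Suc m * q ^ r \<le> \<bar>join_martingale q r (snd s)\<bar>}"
proof -
  define A where "A = {s :: nat \<times> nat list.
    types_ge r (take (Suc (m div 2)) (snd s)) < c * Suc (m div 2) * q ^ (r - 1)}"
  define B where "B = {s :: nat \<times> nat list. c / 4 * Suc m * q ^ (r - 1) \<le> types_ge (Suc r) (snd s)}"
  define B' where "B' = {s :: nat \<times> nat list. r * c / 32 * Suc m * q ^ r \<le> \<bar>join_martingale q r (snd s)\<bar>}"
  have "measure_pmf.prob (yule_chain q m) {s. types_ge (Suc r) (snd s) < r * c / 32 * Suc m * q ^ r}
      \<le> measure_pmf.prob (yule_chain q m) (A \<union> B \<union> B')"
  proof (intro measure_pmf_prob_mono_on_support)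
    fix s
    assume s: "s \<in> set_pmf (yule_chain q m)"
      and small: "s \<in> {s. types_ge (Suc r) (snd s) < r * c / 32 * Suc m * q ^ r}"
    show "s \<in> A \<union> B \<union> B'"
    proof (rule ccontr)
      assume "s \<notin> A \<union> B \<union> B'"
      then have "r * c / 32 * Suc m * q ^ r \<le> types_ge (Suc r) (snd s)"
        unfolding A_def B_def B'_def
        by (intro types_ge_Suc_ge[OF set_pmf_yule_chain(1)[OF s] assms]) auto
      with small show False
        by simp
    qed
  qed
  moreover have "measure_pmf.prob (yule_chain q m) (A \<union> B \<union> B')
      \<le> measure_pmf.prob (yule_chain q m) A + measure_pmf.prob (yule_chain q m) B
        + measure_pmf.prob (yule_chain q m) B'"
    using measure_Un_le[of "A \<union> B" "measure_pmf (yule_chain q m)" B']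
      measure_Un_le[of A "measure_pmf (yule_chain q m)" B]
    by simp
  moreover have "measure_pmf.prob (yule_chain q m) A = measure_pmf.prob (yule_chain q (m div 2))
      {s. types_ge r (snd s) < c * Suc (m div 2) * q ^ (r - 1)}"
    unfolding A_def by (rule prob_yule_chain_take) simp
  ultimately show ?thesis
    unfolding B_def B'_def by linarith
qed

lemma one_div_Suc_half_le:
  fixes q :: real
  assumes "0 < q" "q \<le> 1" "1 \<le> r"
  shows "1 / (Suc (m div 2) * q ^ (r - 1)) \<le> 2 / (Suc m * q ^ r)"
proof -
  have "Suc m \<le> 2 * Suc (m div 2)"
    by presburger
  moreover have "q ^ r \<le> q ^ (r - 1)"
    using assms by (intro power_decreasing) auto
  ultimately have "Suc m * q ^ r \<le> 2 * Suc (m div 2) * q ^ (r - 1)"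
    using assms by (intro mult_mono) auto
  then have "2 / (2 * Suc (m div 2) * q ^ (r - 1)) \<le> 2 / (Suc m * q ^ r)"
    using assms by (intro divide_left_mono) auto
  moreover have "1 / (Suc (m div 2) * q ^ (r - 1)) = 2 / (2 * Suc (m div 2) * q ^ (r - 1))"
    using assms by (simp add: divide_simps)
  ultimately show ?thesis
    by simp
qed

lemma prob_types_ge_lt_Suc:
  fixes q c C :: real
  assumes r: "1 \<le> r" and c: "0 < c" and C: "0 \<le> C" and q: "0 < q" "q \<le> 1"
    and IH: "\<And>m. measure_pmf.prob (yule_chain q m) {s. types_ge r (snd s) < c * Suc m * q ^ (r - 1)}
      \<le> C * (q + 1 / (Suc m * q ^ (r - 1)))"
  shows "measure_pmf.prob (yule_chain q m) {s. types_ge (Suc r) (snd s) < r * c / 32 * Suc m * q ^ r}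
    \<le> (1 + 2 * C + 4 * fact r / c + fact r * (32 / (r * c))\<^sup>2) * (q + 1 / (Suc m * q ^ r))"
    (is "?P \<le> ?K * (q + ?x)")
proof -
  have "0 \<le> 4 * fact r / c" "0 \<le> fact r * (32 / (r * c))\<^sup>2"
    using c by simp_all
  with C have K: "1 \<le> ?K"
    by linarith
  define T where "T = real (Suc m)"
  define Q where "Q = q ^ (r - 1)"
  have T: "0 < T" and x: "0 < ?x"
    unfolding T_def using q by simp_all
  have qQ: "q ^ r = q * Q" and Q: "0 < Q" "q ^ r \<le> 1"
    unfolding Q_def using r q by (auto simp flip: power_Suc intro: power_decreasing power_le_one)
  consider "m = 0" | "1 \<le> m"
    by linarith
  then show ?thesis
  proof cases
    case 1
    then have "1 \<le> ?x"
      using q Q(2) by (simp add: le_divide_eq)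
    have "?P \<le> 1"
      by (rule measure_pmf.prob_le_1)
    also have "\<dots> \<le> ?K * ?x"
      using K \<open>1 \<le> ?x\<close> mult_mono[of 1 ?K 1 ?x] by simp
    also have "\<dots> \<le> ?K * (q + ?x)"
      using K q by (intro mult_left_mono) auto
    finally show ?thesis .
  next
    case 2
    have "1 / (Suc (m div 2) * Q) \<le> 2 * ?x"
      unfolding Q_def using one_div_Suc_half_le[OF q r, of m] by simp
    then have "C * (1 / (Suc (m div 2) * Q)) \<le> C * (2 * ?x)"
      using C by (rule mult_left_mono)
    then have "C * (q + 1 / (Suc (m div 2) * Q)) \<le> C * q + C * (2 * ?x)"
      using distrib_left[of C q "1 / (Suc (m div 2) * Q)"] by linarith
    moreover have "fact r * q ^ r * T / (c / 4 * T * Q) = 4 * fact r / c * q"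
      using c Q T unfolding qQ by (simp add: field_simps)
    moreover have "fact r * q ^ r * T / (r * c / 32 * T * q ^ r)\<^sup>2 = fact r * (32 / (r * c))\<^sup>2 * ?x"
      using c q r T unfolding T_def[symmetric] by (simp add: field_simps power2_eq_square)
    moreover have "C * q + C * (2 * ?x) + 4 * fact r / c * q + fact r * (32 / (r * c))\<^sup>2 * ?x
        \<le> ?K * (q + ?x)"
      using q x C c by (simp add: algebra_simps)
    ultimately show ?thesis
      using prob_types_ge_Suc_lt_le[OF 2 _ r, of q c] IH[of "m div 2"]
        prob_types_ge_ge[of q "c / 4 * T * Q" m r] prob_join_martingale_ge[of q r "r * c / 32 * T * q ^ r" m]
        q c Q T r unfolding T_def Q_def by simp
  qed
qed

lemma prob_types_ge_lt:
  assumes "1 \<le> r"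
  shows "\<exists>c::real. 0 < c \<and> (\<exists>C::real. 0 \<le> C \<and> (\<forall>(q::real) m. 0 < q \<longrightarrow> q \<le> 1 \<longrightarrow>
    measure_pmf.prob (yule_chain q m) {s. types_ge r (snd s) < c * Suc m * q ^ (r - 1)}
      \<le> C * (q + 1 / (Suc m * q ^ (r - 1)))))"
  using assms
proof (induction r rule: dec_induct)
  case base
  have bound: "measure_pmf.prob (yule_chain q m) {s. types_ge 1 (snd s) < 1 / 2 * Suc m * q ^ (1 - 1)}
      \<le> 2 * (q + 1 / (Suc m * q ^ (1 - 1)))" if "0 < q" "q \<le> 1" for q :: real and m
  proof -
    have "measure_pmf.prob (yule_chain q m) {s. types_ge 1 (snd s) < 1 / 2 * Suc m * q ^ (1 - 1)}
        \<le> 2 * q"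
      using prob_types_ge_one_lt[of q m] that by simp
    also have "\<dots> \<le> 2 * (q + 1 / (Suc m * q ^ (1 - 1)))"
      by (intro mult_left_mono add_increasing2) auto
    finally show ?thesis .
  qed
  show ?case
    by (rule exI[of _ "1 / 2"], intro conjI exI[of _ 2] allI impI) (simp, simp, blast intro: bound)
next
  case (step r)
  from step.IH obtain c C :: real where c: "0 < c" "0 \<le> C" and IH: "\<forall>(q::real) m. 0 < q \<longrightarrow> q \<le> 1 \<longrightarrow>
      measure_pmf.prob (yule_chain q m) {s. types_ge r (snd s) < c * Suc m * q ^ (r - 1)}
        \<le> C * (q + 1 / (Suc m * q ^ (r - 1)))"
    by blast
  define K where "K = 1 + 2 * C + 4 * fact r / c + fact r * (32 / (r * c))\<^sup>2"
  have K: "0 \<le> K"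
    unfolding K_def using c by simp
  have bound: "measure_pmf.prob (yule_chain q m)
      {s. types_ge (Suc r) (snd s) < r * c / 32 * Suc m * q ^ (Suc r - 1)}
      \<le> K * (q + 1 / (Suc m * q ^ (Suc r - 1)))" if q: "0 < q" "q \<le> 1" for q :: real and m
    using prob_types_ge_lt_Suc[OF step.hyps(1) c q IH[rule_format, OF q]] unfolding K_def by simp
  have c': "0 < r * c / 32"
    using step.hyps(1) c by simp
  show ?case
    by (rule exI[of _ "r * c / 32"], intro conjI exI[of _ K] allI impI) (rule c', rule K, blast intro: bound)
qed

section \<open>The number of types of a given size\<close>

lemma N_types_eq_types_ge:
  assumes "s \<in> set_pmf (yule_chain q m)" "1 \<le> k"
  shows "N_types s (real k - 1) = types_ge k (snd s)"
proof -
  have "{i. 1 \<le> i \<and> real k - 1 < real (type_count s i)} = {i. k \<le> count_list (snd s) i}"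
  proof (intro set_eqI iffI)
    fix i
    assume "i \<in> {i. k \<le> count_list (snd s) i}"
    then have "i \<in> set (snd s)" "k \<le> count_list (snd s) i"
      using assms(2) count_list_pos_iff[of "snd s" i] by auto
    then show "i \<in> {i. 1 \<le> i \<and> real k - 1 < real (type_count s i)}"
      using set_pmf_yule_chain(2)[OF assms(1)] by (auto simp: type_count_def)
  qed (auto simp: type_count_def)
  then show ?thesis
    unfolding N_types_def types_ge_def by simp
qed

lemma Delta_types_eq:
  assumes "s \<in> set_pmf (yule_chain q m)" "1 \<le> j"
  shows "Delta_types s j = int (types_ge j (snd s)) - int (types_ge (Suc j) (snd s))"
  using N_types_eq_types_ge[OF assms] N_types_eq_types_ge[OF assms(1), of "Suc j"]
  unfolding Delta_types_def by simp

lemma prob_Delta_types_gt_ge: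
  fixes M \<theta> :: real
  assumes "1 \<le> j" "M \<le> \<theta> / 2"
  shows "1 - measure_pmf.prob (yule_chain q m) {s. types_ge j (snd s) < \<theta>}
      - measure_pmf.prob (yule_chain q m) {s. \<theta> / 2 \<le> types_ge (Suc j) (snd s)}
    \<le> measure_pmf.prob (yule_chain q m) {s. M < Delta_types s j}"
proof -
  define A where "A = {s :: nat \<times> nat list. types_ge j (snd s) < \<theta>}"
  define B where "B = {s :: nat \<times> nat list. \<theta> / 2 \<le> types_ge (Suc j) (snd s)}"
  have "measure_pmf.prob (yule_chain q m) (UNIV - (A \<union> B))
      \<le> measure_pmf.prob (yule_chain q m) {s. M < Delta_types s j}"
    using Delta_types_eq[OF _ assms(1)] assms(2) unfolding A_def B_def
    by (intro measure_pmf_prob_mono_on_support) fastforce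
  moreover have "measure_pmf.prob (yule_chain q m) (UNIV - (A \<union> B))
      = 1 - measure_pmf.prob (yule_chain q m) (A \<union> B)"
    using measure_pmf.prob_compl[of "A \<union> B" "yule_chain q m"] by simp
  moreover have "measure_pmf.prob (yule_chain q m) (A \<union> B)
      \<le> measure_pmf.prob (yule_chain q m) A + measure_pmf.prob (yule_chain q m) B"
    by (rule measure_Un_le) auto
  ultimately show ?thesis
    unfolding A_def B_def by linarith
qed

lemma prob_Delta_types_gt:
  assumes "1 \<le> j"
  shows "\<exists>c::real. 0 < c \<and> (\<exists>C::real. \<forall>(q::real) m (M::real). 0 < q \<longrightarrow> q \<le> 1 \<longrightarrow>
    M \<le> c * Suc m * q ^ (j - 1) \<longrightarrow>
    1 - C * (q + 1 / (Suc m * q ^ (j - 1))) \<le> measure_pmf.prob (yule_chain q m) {s. M < Delta_types s j})"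
proof -
  obtain c C :: real where c: "0 < c" and lower: "\<And>(q::real) m. 0 < q \<Longrightarrow> q \<le> 1 \<Longrightarrow>
      measure_pmf.prob (yule_chain q m) {s. types_ge j (snd s) < c * Suc m * q ^ (j - 1)}
        \<le> C * (q + 1 / (Suc m * q ^ (j - 1)))"
    using prob_types_ge_lt[OF assms] by blast
  have bound: "1 - (C + 2 * fact j / c) * (q + 1 / (Suc m * q ^ (j - 1)))
      \<le> measure_pmf.prob (yule_chain q m) {s. M < Delta_types s j}"
    if q: "0 < q" "q \<le> 1" and M: "M \<le> c / 2 * Suc m * q ^ (j - 1)" for q M :: real and m
  proof -
    define T where "T = real (Suc m)"
    define Q where "Q = q ^ (j - 1)"
    define x where "x = 1 / (T * Q)"
    have T: "0 < T" and Q: "0 < Q" "q ^ j = q * Q" and x: "0 \<le> x"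
      unfolding x_def T_def Q_def using q assms by (auto simp flip: power_Suc)
    have "measure_pmf.prob (yule_chain q m) {s. c * T * Q / 2 \<le> types_ge (Suc j) (snd s)}
        \<le> fact j * q ^ j * T / (c * T * Q / 2)"
      unfolding T_def using q c Q by (intro prob_types_ge_ge) auto
    also have "\<dots> = 2 * fact j / c * q"
      using c T Q by (simp add: field_simps)
    finally have "1 - C * (q + x) - 2 * fact j / c * q
        \<le> measure_pmf.prob (yule_chain q m) {s. M < Delta_types s j}"
      using prob_Delta_types_gt_ge[OF assms, of M "c * T * Q" q m] lower[OF q, of m] M
      unfolding x_def T_def Q_def by simp
    moreover have "(C + 2 * fact j / c) * (q + x) = C * (q + x) + 2 * fact j / c * q + 2 * fact j / c * x"
      by (simp add: algebra_simps add_divide_distrib)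
    moreover have "0 \<le> 2 * fact j / c * x"
      using c x by simp
    ultimately show ?thesis
      unfolding x_def T_def Q_def by linarith
  qed
  have "0 < c / 2"
    using c by simp
  then show ?thesis
    by (intro exI[of _ "c / 2"] conjI exI[of _ "C + 2 * fact j / c"] allI impI) (blast intro: bound)+
qed

lemma filterlim_power_law_at_top:
  assumes "0 < a" "1 \<le> j" "j \<le> l"
  shows "filterlim (\<lambda>n. real n * (a * real n powr (- 1 / real l)) ^ (j - 1)) at_top sequentially"
proof -
  define e where "e = 1 + real (j - 1) * (- 1 / real l)"
  have "real (j - 1) < real l"
    using assms by linarith
  then have e: "0 < e"
    unfolding e_def by (simp add: field_simps)
  have "filterlim (\<lambda>n. a ^ (j - 1) * real n powr e) at_top sequentially"
    using assms(1) by (intro filterlim_tendsto_pos_mult_at_top[OF tendsto_const]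
        filterlim_compose[OF real_powr_at_top[OF e] filterlim_real_sequentially]) auto
  moreover have "eventually (\<lambda>n. a ^ (j - 1) * real n powr e
      = real n * (a * real n powr (- 1 / real l)) ^ (j - 1)) sequentially"
    using eventually_gt_at_top[of 0]
  proof eventually_elim
    case (elim n)
    have "(real n powr (- 1 / real l)) ^ (j - 1) = real n powr (real (j - 1) * (- 1 / real l))"
      using elim by (intro powr_power) simp
    moreover have "real n * real n powr (real (j - 1) * (- 1 / real l)) = real n powr e"
      unfolding e_def using elim by (simp add: powr_mult_base)
    ultimately show ?case
      unfolding power_mult_distrib by (metis mult.left_commute)
  qed
  ultimately show ?thesis
    by (rule filterlim_cong[THEN iffD1, OF refl refl, rotated])
qed

lemma power_law_asymptotics:
  fixes p :: "nat \<Rightarrow> real" and a :: real and l j :: nat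
  assumes p: "p \<sim>[sequentially] (\<lambda>n. a * real n powr (- 1 / real l))"
    and "0 < a" "1 \<le> j" "j \<le> l"
  shows "eventually (\<lambda>n. 0 < p n) sequentially"
    and "filterlim (\<lambda>n. real n * p n ^ (j - 1)) at_top sequentially"
    and "(\<lambda>n. p n + 1 / (real n * p n ^ (j - 1))) \<longlonglongrightarrow> 0"
proof -
  define g where "g n = a * real n powr (- 1 / real l)" for n
  have "eventually (\<lambda>n. 0 < g n) sequentially"
    using eventually_gt_at_top[of 0] by eventually_elim (simp add: g_def assms)
  with asymp_equiv_eventually_pos_iff[OF p[folded g_def]] show "eventually (\<lambda>n. 0 < p n) sequentially"
    by eventually_elim simp
  have "(\<lambda>n. real n * p n ^ (j - 1)) \<sim>[sequentially] (\<lambda>n. real n * g n ^ (j - 1))"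
    using p[folded g_def] by (intro asymp_equiv_mult asymp_equiv_refl asymp_equiv_power)
  then show pT: "filterlim (\<lambda>n. real n * p n ^ (j - 1)) at_top sequentially"
    using asymp_equiv_at_top_transfer[OF asymp_equiv_symI] filterlim_power_law_at_top[OF assms(2-4)]
    unfolding g_def by blast
  have "g \<longlonglongrightarrow> 0"
    unfolding g_def using assms
    by (intro tendsto_mult_right_zero tendsto_neg_powr filterlim_real_sequentially) simp
  then have "p \<longlonglongrightarrow> 0"
    using asymp_equiv_tendsto_transfer[OF asymp_equiv_symI[OF p[folded g_def]]] by blast
  then show "(\<lambda>n. p n + 1 / (real n * p n ^ (j - 1))) \<longlonglongrightarrow> 0"
    using tendsto_inverse_0_at_top[OF pT] by (intro tendsto_add_zero) (simp_all add: divide_inverse)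
qed

theorem corollary4p2:
  fixes l :: nat and a :: real and p :: "nat \<Rightarrow> real"
  assumes "l \<ge> 1" and "a > 0"
    and "\<And>n. 0 \<le> p n \<and> p n \<le> 1"
    and "p \<sim>[sequentially] (\<lambda>n. a * real n powr (- 1 / real l))"
    and "j \<in> {1..l}"
  shows "\<forall>M::real. ((\<lambda>n. measure_pmf.prob (yule_at_tau (p n) n)
                {s. real_of_int (Delta_types s j) > M}) \<longlongrightarrow> 1) sequentially"
proof
  fix M :: real
  have j: "1 \<le> j" "j \<le> l"
    using assms(5) by auto
  obtain c C :: real where c: "0 < c" and bound: "\<And>(q::real) m (M::real). 0 < q \<Longrightarrow> q \<le> 1 \<Longrightarrow>
      M \<le> c * Suc m * q ^ (j - 1) \<Longrightarrow>
      1 - C * (q + 1 / (Suc m * q ^ (j - 1))) \<le> measure_pmf.prob (yule_chain q m) {s. M < Delta_types s j}"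
    using prob_Delta_types_gt[OF j(1)] by blast
  note p = power_law_asymptotics[OF assms(4,2) j]
  have lower: "eventually (\<lambda>n. 1 - C * (p n + 1 / (real n * p n ^ (j - 1)))
      \<le> measure_pmf.prob (yule_at_tau (p n) n) {s. real_of_int (Delta_types s j) > M}) sequentially"
    using eventually_gt_at_top[of 0] p(1) filterlim_at_top_dense[THEN iffD1, OF p(2), rule_format, of "M / c"]
  proof eventually_elim
    case (elim n)
    then have "M < c * Suc (n - 1) * p n ^ (j - 1)"
      using c by (simp add: field_simps)
    then show ?case
      using bound[of "p n" M "n - 1"] elim assms(3)[of n] unfolding yule_at_tau_def by simp
  qed
  have upper: "eventually (\<lambda>n. measure_pmf.prob (yule_at_tau (p n) n)
      {s. real_of_int (Delta_types s j) > M} \<le> 1) sequentially"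
    by (simp add: measure_pmf.prob_le_1)
  show "((\<lambda>n. measure_pmf.prob (yule_at_tau (p n) n)
      {s. real_of_int (Delta_types s j) > M}) \<longlongrightarrow> 1) sequentially"
    using tendsto_diff[OF tendsto_const tendsto_mult_right_zero[OF p(3)], of 1 C]
    by (intro tendsto_sandwich[OF lower upper _ tendsto_const]) simp
qed

end
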